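(* Let $h\geq 3$ and $v\equiv 0\pmod{2h}$. If there exists a $(K_2,S(C_h))$-URD$(v;r,s)$, then $(r,s)\in J(v)$, where $J(v)=\{(3+4x,\ \frac{v-4}{2}-2x) : x=0,1,\ldots,\frac{v-4}{4}\}$ if $v\equiv 0\pmod{4h}$, or if $v\equiv 2h\pmod{4h}$ and $h$ is even; and $J(v)=\{(1+4x,\ \frac{v-2}{2}-2x) : x=0,1,\ldots,\frac{v-2}{4}\}$ if $v\equiv 2h\pmod{4h}$ and $h$ is odd.
   Context: For $h\geq 3$, an $h$-sun is the graph on $2h$ distinct vertices $a_1,\ldots,a_h,b_1,\ldots,b_h$ consisting of the $h$-cycle $(a_1,a_2,\ldots,a_h)$ together with the edges $\{a_i,b_i\}$, $i=1,\ldots,h$. A $(K_2,S(C_h))$-URD$(v;r,s)$ is a partition of the edge set of the complete graph $K_v$ into $r$ classes each of which is a 1-factor (perfect matching) of $K_v$, and $s$ classes each of which is a set of vertex-disjoint $h$-suns covering every vertex of $K_v$ exactly once. *)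

theory Defs
  imports Main
begin

definition Kv_edges :: "nat \<Rightarrow> nat set set" where
  "Kv_edges v = {{x, y} | x y. x < v \<and> y < v \<and> x \<noteq> y}"

definition one_factor :: "nat \<Rightarrow> nat set set \<Rightarrow> bool" where
  "one_factor v M \<longleftrightarrow> M \<subseteq> Kv_edges v \<and> (\<forall>x<v. \<exists>!e. e \<in> M \<and> x \<in> e)"

definition sun_edges :: "nat \<Rightarrow> (nat \<Rightarrow> nat) \<Rightarrow> (nat \<Rightarrow> nat) \<Rightarrow> nat set set" where
  "sun_edges h a b = {{a i, a (Suc i mod h)} | i. i < h} \<union> {{a i, b i} | i. i < h}"

definition is_sun :: "nat \<Rightarrow> nat set set \<Rightarrow> bool" where
  "is_sun h G \<longleftrightarrow> (\<exists>a b. inj_on a {..<h} \<and> inj_on b {..<h} \<and>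
       a ` {..<h} \<inter> b ` {..<h} = {} \<and> G = sun_edges h a b)"

text \<open>A class of vertex-disjoint h-suns covering every vertex of K_v exactly once
  (as a set of edges: the union of the suns' edge sets). The vertex set of a sun G is \<Union>G.\<close>
definition sun_class :: "nat \<Rightarrow> nat \<Rightarrow> nat set set \<Rightarrow> bool" where
  "sun_class h v E \<longleftrightarrow> (\<exists>\<C>. (\<forall>G\<in>\<C>. is_sun h G) \<and>
       (\<forall>G\<in>\<C>. \<forall>G'\<in>\<C>. G \<noteq> G' \<longrightarrow> \<Union>G \<inter> \<Union>G' = {}) \<and>
       \<Union>(\<Union>\<C>) = {..<v} \<and> E = \<Union>\<C>)"

text \<open>A (K_2, S(C_h))-URD(v; r, s): the edges of K_v are partitioned into r 1-factors
  F 0, ..., F (r-1) and s sun classes S 0, ..., S (s-1).\<close>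
definition URD :: "nat \<Rightarrow> nat \<Rightarrow> nat \<Rightarrow> nat \<Rightarrow> bool" where
  "URD h v r s \<longleftrightarrow> (\<exists>F S.
     (\<forall>i<r. one_factor v (F i)) \<and> (\<forall>j<s. sun_class h v (S j)) \<and>
     (let cls = (\<lambda>k. if k < r then F k else S (k - r)) in
        (\<forall>k<r+s. \<forall>l<r+s. k \<noteq> l \<longrightarrow> cls k \<inter> cls l = {}) \<and>
        (\<Union>k<r+s. cls k) = Kv_edges v))"

definition J :: "nat \<Rightarrow> nat \<Rightarrow> (nat \<times> nat) set" where
  "J h v = (if v mod (4*h) = 0 \<or> (v mod (4*h) = 2*h \<and> even h)
            then {(3 + 4*x, (v - 4) div 2 - 2*x) | x. x \<le> (v - 4) div 4}
            else {(1 + 4*x, (v - 2) div 2 - 2*x) | x. x \<le> (v - 2) div 4})"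

end

theory Submission
  imports Defs
begin

text \<open>
  Count, at every vertex x of K_v, the edges through x class by class. A 1-factor contributes
  one edge, and a sun class contributes three edges when x lies on a cycle and one when x is
  a pendant vertex; in particular an odd number. Hence v - 1 = r + \<Sum>_j deg_j(x) with all
  deg_j(x) odd, so v - 1 \<equiv> r + s (mod 2). Summing over all vertices instead, every sun
  class has degree sum 2v, because half of the vertices of each sun lie on its cycle, which
  gives v(v - 1) = rv + 2sv, i.e. v - 1 = r + 2s. Together s is even, and the description of
  J(v) is then elementary arithmetic: since 2h divides v, the case distinction in J(v) only
  asks whether 4 divides v.
\<close>

definition degree :: "'a set set \<Rightarrow> 'a \<Rightarrow> nat" where
  "degree E x = card {e \<in> E. x \<in> e}"

lemma degree_UN_disjoint:
  assumes "finite I" "\<And>i. i \<in> I \<Longrightarrow> finite (E i)"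
    "\<And>i j. i \<in> I \<Longrightarrow> j \<in> I \<Longrightarrow> i \<noteq> j \<Longrightarrow> E i \<inter> E j = {}"
  shows "degree (\<Union>i\<in>I. E i) x = (\<Sum>i\<in>I. degree (E i) x)"
proof -
  have "{e \<in> (\<Union>i\<in>I. E i). x \<in> e} = (\<Union>i\<in>I. {e \<in> E i. x \<in> e})"
    by blast
  then show ?thesis
    unfolding degree_def using assms by (simp add: card_UN_disjoint disjoint_iff)
qed

lemma degree_Union_vertex_disjoint:
  assumes "G \<in> C" "x \<in> \<Union>G" "\<And>G'. G' \<in> C \<Longrightarrow> G' \<noteq> G \<Longrightarrow> \<Union>G \<inter> \<Union>G' = {}"
  shows "degree (\<Union>C) x = degree G x"
proof -
  have "{e \<in> \<Union>C. x \<in> e} = {e \<in> G. x \<in> e}"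
    using assms by blast
  then show ?thesis
    unfolding degree_def by simp
qed

lemma finite_Kv_edges: "finite (Kv_edges v)"
proof (rule finite_subset)
  show "Kv_edges v \<subseteq> Pow {..<v}"
    unfolding Kv_edges_def by auto
qed simp

lemma degree_Kv_edges:
  assumes "x < v"
  shows "degree (Kv_edges v) x = v - 1"
proof -
  have "{e \<in> Kv_edges v. x \<in> e} = (\<lambda>y. {x, y}) ` ({..<v} - {x})"
    using assms unfolding Kv_edges_def by (auto simp: doubleton_eq_iff)
  moreover have "inj_on (\<lambda>y. {x, y}) ({..<v} - {x})"
    by (rule inj_onI) (auto simp: doubleton_eq_iff)
  ultimately show ?thesis
    unfolding degree_def using assms by (simp add: card_image)
qed

lemma degree_one_factor:
  assumes "one_factor v M" "x < v"
  shows "degree M x = 1"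
proof -
  have "\<exists>!e. e \<in> M \<and> x \<in> e"
    using assms unfolding one_factor_def by blast
  then obtain e where "{e' \<in> M. x \<in> e'} = {e}"
    by (auto elim!: ex1E)
  then show ?thesis
    unfolding degree_def by simp
qed

lemma Suc_mod_eq_iff:
  fixes i j h :: nat
  assumes "i < h" "j < h"
  shows "Suc j mod h = i \<longleftrightarrow> j = (i + h - 1) mod h"
  using assms by (cases "Suc j = h") (auto simp: mod_if)

lemma Union_sun_edges:
  assumes "h > 0"
  shows "\<Union>(sun_edges h a b) = a ` {..<h} \<union> b ` {..<h}"
  using assms by (auto simp: sun_edges_def)

lemma sun_edges_cycle_edge: "i < h \<Longrightarrow> {a i, a (Suc i mod h)} \<in> sun_edges h a b"
  unfolding sun_edges_def by blast

lemma sun_edges_pendant_edge: "i < h \<Longrightarrow> {a i, b i} \<in> sun_edges h a b"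
  unfolding sun_edges_def by blast

lemma sun_edgesE:
  assumes "e \<in> sun_edges h a b"
  obtains j where "j < h" "e = {a j, a (Suc j mod h)}"
  | j where "j < h" "e = {a j, b j}"
  using assms unfolding sun_edges_def by blast

lemma sun_edges_at_cycle_vertex:
  assumes "h > 0" "inj_on a {..<h}" "a ` {..<h} \<inter> b ` {..<h} = {}" "i < h"
  shows "{e \<in> sun_edges h a b. a i \<in> e} =
    {{a i, a (Suc i mod h)}, {a ((i + h - 1) mod h), a i}, {a i, b i}}"
    (is "_ = {?next, ?prev, ?pendant}")
proof (rule set_eqI, rule iffI)
  have inj: "a i = a k \<longleftrightarrow> i = k" if "k < h" for k
    using assms(2,4) that by (auto dest: inj_onD)
  fix e assume e: "e \<in> {e \<in> sun_edges h a b. a i \<in> e}"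
  then show "e \<in> {?next, ?prev, ?pendant}"
  proof (cases rule: sun_edgesE[OF CollectD[OF e, THEN conjunct1]])
    case (1 j)
    have "a i = a j \<or> a i = a (Suc j mod h)"
      using 1(2) e by blast
    then have "i = j \<or> Suc j mod h = i"
      using inj[OF 1(1)] inj[of "Suc j mod h"] assms(1) by auto
    then show ?thesis
    proof
      assume "Suc j mod h = i"
      moreover from this have "j = (i + h - 1) mod h"
        using Suc_mod_eq_iff[of i h j] assms(4) 1(1) by simp
      ultimately have "e = ?prev"
        using 1(2) by (simp only:)
      then show ?thesis
        by simp
    qed (use 1 in simp)
  next
    case (2 j)
    then show ?thesis
      using e inj assms(3,4) by auto
  qed
next
  have "Suc ((i + h - 1) mod h) mod h = i"
    using Suc_mod_eq_iff[of i h "(i + h - 1) mod h"] assms(1,4) by simp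
  then have "?prev \<in> sun_edges h a b"
    using sun_edges_cycle_edge[of "(i + h - 1) mod h" h a b] assms(1) by (simp add: insert_commute)
  then show "e \<in> {e \<in> sun_edges h a b. a i \<in> e}" if "e \<in> {?next, ?prev, ?pendant}" for e
    using that sun_edges_cycle_edge sun_edges_pendant_edge assms(4) by auto
qed

text \<open>The assumption h \<ge> 3 is where the three edges at a cycle vertex become distinct.\<close>
lemma degree_sun_edges_cycle:
  assumes "h \<ge> 3" "inj_on a {..<h}" "a ` {..<h} \<inter> b ` {..<h} = {}" "i < h"
  shows "degree (sun_edges h a b) (a i) = 3"
proof -
  let ?next = "Suc i mod h" and ?prev = "(i + h - 1) mod h"
  have inj: "a j = a k \<longleftrightarrow> j = k" if "j < h" "k < h" for j k
    using assms(2) that by (auto dest: inj_onD)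
  have ab: "a j \<noteq> b k" if "j < h" "k < h" for j k
    using assms(3) that by auto
  have "?next \<noteq> i" "?prev \<noteq> i" "?next \<noteq> ?prev"
    using assms(1,4) by (auto simp: mod_if split: if_splits)
  moreover have "?next < h" "?prev < h"
    using assms(1) by auto
  moreover have "{e \<in> sun_edges h a b. a i \<in> e} = {{a i, a ?next}, {a ?prev, a i}, {a i, b i}}"
    using assms by (intro sun_edges_at_cycle_vertex) auto
  ultimately show ?thesis
    unfolding degree_def using assms(4) by (auto simp: card_insert_if doubleton_eq_iff inj ab)
qed

lemma degree_sun_edges_pendant:
  assumes "inj_on b {..<h}" "a ` {..<h} \<inter> b ` {..<h} = {}" "i < h"
  shows "degree (sun_edges h a b) (b i) = 1"
proof -
  have not_cycle: "b i \<noteq> a j" if "j < h" for j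
    using assms(2,3) that by blast
  have "{e \<in> sun_edges h a b. b i \<in> e} = {{a i, b i}}"
  proof (rule set_eqI, rule iffI)
    fix e assume e: "e \<in> {e \<in> sun_edges h a b. b i \<in> e}"
    then show "e \<in> {{a i, b i}}"
    proof (cases rule: sun_edgesE[OF CollectD[OF e, THEN conjunct1]])
      case (1 j)
      moreover have "Suc j mod h < h"
        using 1(1) by simp
      ultimately show ?thesis
        using e not_cycle by blast
    next
      case (2 j)
      then have "b i = b j"
        using e not_cycle by blast
      then show ?thesis
        using 2 assms(1,3) by (simp add: inj_on_eq_iff)
    qed
  qed (use sun_edges_pendant_edge assms(3) in auto)
  then show ?thesis
    unfolding degree_def by simp
qed

lemma odd_degree_sun:
  assumes "h \<ge> 3" "is_sun h G" "x \<in> \<Union>G"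
  shows "odd (degree G x)"
proof -
  obtain a b where a: "inj_on a {..<h}" and b: "inj_on b {..<h}"
    and disj: "a ` {..<h} \<inter> b ` {..<h} = {}" and G: "G = sun_edges h a b"
    using assms(2) unfolding is_sun_def by blast
  have "x \<in> a ` {..<h} \<union> b ` {..<h}"
    using Union_sun_edges assms(1,3) G by simp
  then show ?thesis
    using degree_sun_edges_cycle[OF assms(1) a disj] degree_sun_edges_pendant[OF b disj]
    unfolding G by auto
qed

lemma sum_degree_sun:
  assumes "h \<ge> 3" "is_sun h G"
  shows "(\<Sum>x\<in>\<Union>G. degree G x) = 2 * card (\<Union>G)"
proof -
  obtain a b where a: "inj_on a {..<h}" and b: "inj_on b {..<h}"
    and disj: "a ` {..<h} \<inter> b ` {..<h} = {}" and G: "G = sun_edges h a b"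
    using assms(2) unfolding is_sun_def by blast
  have vertices: "\<Union>G = a ` {..<h} \<union> b ` {..<h}"
    using Union_sun_edges assms(1) G by simp
  have "(\<Sum>x\<in>\<Union>G. degree G x) = (\<Sum>x\<in>a ` {..<h}. degree G x) + (\<Sum>x\<in>b ` {..<h}. degree G x)"
    unfolding vertices using disj by (simp add: sum.union_disjoint)
  also have "\<dots> = (\<Sum>i<h. degree G (a i)) + (\<Sum>i<h. degree G (b i))"
    using a b by (simp add: sum.reindex)
  also have "\<dots> = 4 * h"
    using degree_sun_edges_cycle[OF assms(1) a disj] degree_sun_edges_pendant[OF b disj]
    unfolding G by simp
  also have "\<dots> = 2 * card (\<Union>G)"
    unfolding vertices using a b disj by (simp add: card_Un_disjoint card_image)
  finally show ?thesis .
qed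

lemma sum_degree_sun_class:
  assumes "h \<ge> 3" "sun_class h v E"
  shows "(\<Sum>x<v. degree E x) = 2 * v"
proof -
  obtain C where suns: "\<forall>G\<in>C. is_sun h G"
    and disj: "\<forall>G\<in>C. \<forall>G'\<in>C. G \<noteq> G' \<longrightarrow> \<Union>G \<inter> \<Union>G' = {}"
    and cover: "\<Union>(\<Union>C) = {..<v}" and E: "E = \<Union>C"
    using assms(2) unfolding sun_class_def by blast
  have vertices: "{..<v} = (\<Union>G\<in>C. \<Union>G)"
    using cover by blast
  have "C \<subseteq> Pow (Pow {..<v})"
    using cover by blast
  then have fin: "finite C"
    by (rule finite_subset) simp
  have fin_vertices: "finite (\<Union>G)" if "G \<in> C" for G
    using that cover finite_subset[of "\<Union>G" "{..<v}"] by blast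
  have "(\<Sum>x<v. degree E x) = (\<Sum>G\<in>C. \<Sum>x\<in>\<Union>G. degree E x)"
    unfolding vertices using fin fin_vertices disj by (simp add: sum.UNION_disjoint)
  also have "\<dots> = (\<Sum>G\<in>C. \<Sum>x\<in>\<Union>G. degree G x)"
    unfolding E using disj by (intro sum.cong refl degree_Union_vertex_disjoint) auto
  also have "\<dots> = (\<Sum>G\<in>C. 2 * card (\<Union>G))"
    using suns assms(1) by (simp add: sum_degree_sun)
  also have "\<dots> = 2 * card (\<Union>G\<in>C. \<Union>G)"
    using fin fin_vertices disj by (simp add: card_UN_disjoint sum_distrib_left)
  also have "\<dots> = 2 * v"
    unfolding vertices[symmetric] by simp
  finally show ?thesis .
qed

lemma odd_degree_sun_class:
  assumes "h \<ge> 3" "sun_class h v E" "x < v"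
  shows "odd (degree E x)"
proof -
  obtain C where suns: "\<forall>G\<in>C. is_sun h G"
    and disj: "\<forall>G\<in>C. \<forall>G'\<in>C. G \<noteq> G' \<longrightarrow> \<Union>G \<inter> \<Union>G' = {}"
    and cover: "\<Union>(\<Union>C) = {..<v}" and E: "E = \<Union>C"
    using assms(2) unfolding sun_class_def by blast
  obtain G where G: "G \<in> C" "x \<in> \<Union>G"
    using cover assms(3) by blast
  then have "degree E x = degree G x"
    unfolding E using disj by (intro degree_Union_vertex_disjoint) auto
  then show ?thesis
    using odd_degree_sun[OF assms(1)] suns G by simp
qed

lemma sum_lessThan_add:
  fixes f :: "nat \<Rightarrow> 'a::comm_monoid_add"
  shows "(\<Sum>k<r + s. f k) = (\<Sum>k<r. f k) + (\<Sum>j<s. f (r + j))"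
  by (induction s) (simp_all add: add.assoc)

lemma URD_degree_decomposition:
  assumes "URD h v r s"
  obtains S where "\<And>j. j < s \<Longrightarrow> sun_class h v (S j)"
    and "\<And>x. x < v \<Longrightarrow> v - 1 = r + (\<Sum>j<s. degree (S j) x)"
proof -
  obtain F S where F: "\<forall>i<r. one_factor v (F i)" and S: "\<forall>j<s. sun_class h v (S j)"
    and partition: "let cls = (\<lambda>k. if k < r then F k else S (k - r)) in
        (\<forall>k<r+s. \<forall>l<r+s. k \<noteq> l \<longrightarrow> cls k \<inter> cls l = {}) \<and> (\<Union>k<r+s. cls k) = Kv_edges v"
    using assms unfolding URD_def by blast
  define cls where "cls k = (if k < r then F k else S (k - r))" for k
  have disjoint: "\<And>k l. k < r + s \<Longrightarrow> l < r + s \<Longrightarrow> k \<noteq> l \<Longrightarrow> cls k \<inter> cls l = {}"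
    and cover: "(\<Union>k<r+s. cls k) = Kv_edges v"
    using partition unfolding cls_def[abs_def] Let_def by blast+
  have "v - 1 = r + (\<Sum>j<s. degree (S j) x)" if "x < v" for x
  proof -
    have "v - 1 = degree (\<Union>k<r+s. cls k) x"
      using cover degree_Kv_edges that by simp
    also have "\<dots> = (\<Sum>k<r+s. degree (cls k) x)"
      using cover finite_Kv_edges disjoint by (intro degree_UN_disjoint) (auto intro: finite_subset)
    also have "\<dots> = (\<Sum>i<r. degree (F i) x) + (\<Sum>j<s. degree (S j) x)"
      unfolding sum_lessThan_add cls_def by simp
    also have "(\<Sum>i<r. degree (F i) x) = (\<Sum>i<r. 1)"
      using F that degree_one_factor by (intro sum.cong refl) auto
    finally show ?thesis
      by simp
  qed
  with S that show ?thesis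
    by blast
qed

lemma URD_degree_conditions:
  assumes "h \<ge> 3" "v > 0" "URD h v r s"
  shows "v - 1 = r + 2 * s \<and> even s"
proof -
  obtain S where S: "\<And>j. j < s \<Longrightarrow> sun_class h v (S j)"
    and degree_sum: "\<And>x. x < v \<Longrightarrow> v - 1 = r + (\<Sum>j<s. degree (S j) x)"
    using URD_degree_decomposition[OF assms(3)] by blast
  have "v * (v - 1) = (\<Sum>x<v. v - 1)"
    by simp
  also have "\<dots> = (\<Sum>x<v. r + (\<Sum>j<s. degree (S j) x))"
    using degree_sum by (intro sum.cong refl) auto
  also have "\<dots> = v * r + (\<Sum>j<s. \<Sum>x<v. degree (S j) x)"
    by (simp add: sum.distrib sum.swap[of _ "{..<v}"])
  also have "(\<Sum>j<s. \<Sum>x<v. degree (S j) x) = (\<Sum>j<s. 2 * v)"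
    using S sum_degree_sun_class[OF assms(1)] by (intro sum.cong refl) auto
  finally have "v * (v - 1) = v * (r + 2 * s)"
    by (simp add: distrib_left mult.left_commute)
  then have count: "v - 1 = r + 2 * s"
    using assms(2) by simp
  have "{j \<in> {..<s}. odd (degree (S j) 0)} = {..<s}"
    using S odd_degree_sun_class[OF assms(1) _ assms(2)] by auto
  then have "even (\<Sum>j<s. degree (S j) 0) \<longleftrightarrow> even s"
    by (simp add: even_sum_iff)
  moreover have "(\<Sum>j<s. degree (S j) 0) = 2 * s"
    using count degree_sum[OF assms(2)] by simp
  ultimately show ?thesis
    using count by simp
qed

lemma mod_4_mult_cases_iff_4_dvd:
  fixes h v :: nat
  assumes "2 * h dvd v"
  shows "(v mod (4 * h) = 0 \<or> (v mod (4 * h) = 2 * h \<and> even h)) \<longleftrightarrow> 4 dvd v"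
proof -
  obtain k where v: "v = 2 * h * k"
    using assms by blast
  have "v mod (4 * h) = 2 * h * (k mod 2)"
    unfolding v using mod_mult_mult1[of "2 * h" k 2] by (simp add: mult.commute mult.left_commute)
  moreover have "4 dvd v \<longleftrightarrow> even h \<or> even k"
    unfolding v by auto
  ultimately show ?thesis
    by (cases "h = 0") (auto simp: v elim!: oddE)
qed

lemma mem_J_if_degree_conditions:
  fixes h v r s :: nat
  assumes "v > 0" "2 * h dvd v" "v - 1 = r + 2 * s" "even s"
  shows "(r, s) \<in> J h v"
proof -
  obtain t where s: "s = 2 * t"
    using assms(4) by blast
  have J: "J h v = (if 4 dvd v
      then {(3 + 4 * x, (v - 4) div 2 - 2 * x) | x. x \<le> (v - 4) div 4}
      else {(1 + 4 * x, (v - 2) div 2 - 2 * x) | x. x \<le> (v - 2) div 4})"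
    unfolding J_def mod_4_mult_cases_iff_4_dvd[OF assms(2)] ..
  show ?thesis
  proof (cases "4 dvd v")
    case True
    then obtain w where "v = 4 * w"
      by blast
    then have "(r, s) = (3 + 4 * (w - 1 - t), (v - 4) div 2 - 2 * (w - 1 - t))"
      and "w - 1 - t \<le> (v - 4) div 4"
      using assms(1,3) s by auto
    then show ?thesis
      unfolding J if_P[OF True] by blast
  next
    case False
    moreover have "even v"
      using assms(2) dvd_mult_left by blast
    ultimately have "\<exists>w. v = 4 * w + 2"
      by presburger
    then obtain w where "v = 4 * w + 2"
      by blast
    then have "(r, s) = (1 + 4 * (w - t), (v - 2) div 2 - 2 * (w - t))"
      and "w - t \<le> (v - 2) div 4"
      using assms(3) s by auto
    then show ?thesis
      unfolding J if_not_P[OF False] by blast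
  qed
qed

theorem lemma2p2:
  fixes h v r s :: nat
  assumes "h \<ge> 3" and "v > 0" and "v mod (2*h) = 0"
    and "URD h v r s"
  shows "(r, s) \<in> J h v"
  using URD_degree_conditions[OF assms(1,2,4)] assms(2,3)
  by (simp add: mem_J_if_degree_conditions dvd_eq_mod_eq_0)
end
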